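(* Let $(z,x)$ be a feasible solution of the cluster LP on a finite vertex set $V$, and define $y_{uv}=\sum_{S\supseteq\{u,v\}}z_S$ and $y_{uvw}=\sum_{S\supseteq\{u,v,w\}}z_S$ for all $u,v,w\in V$ (not necessarily distinct; so $y_{uu}=1$). Let $I_1,\dots,I_t$ be a partition of $[0,1]$ into intervals. Fix $u\in V$ and define $Q_u\in\mathbb R^{t\times t}$ by $$Q_u(I_j,I_k)=\sum_{v,w\in V:\ y_{uv}\in I_j,\ y_{uw}\in I_k}\big(y_{uvw}-y_{uv}y_{uw}\big).$$ Then $Q_u$ is positive semidefinite.
   Context: The cluster LP for a finite vertex set $V$ has a variable $z_S$ for every nonempty $S\subseteq V$ and $x_{uv}$ for every unordered pair $uv$ of distinct vertices, with constraints $\sum_{S\ni u}z_S=1$ for all $u\in V$, $\sum_{S\supseteq\{u,v\}}z_S=1-x_{uv}$ for all $uv$, and $z_S\ge0$. *)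

theory Defs
  imports "HOL-Analysis.Analysis"
begin

text \<open>Feasibility for the cluster LP on a finite vertex set V.
  z is indexed by subsets (only nonempty subsets of V matter), x by pairs of vertices
  (for an unordered pair uv we require x u v = x v u).\<close>
definition cluster_lp_feasible :: "'a set \<Rightarrow> ('a set \<Rightarrow> real) \<Rightarrow> ('a \<Rightarrow> 'a \<Rightarrow> real) \<Rightarrow> bool" where
  "cluster_lp_feasible V z x \<longleftrightarrow>
     (\<forall>S. S \<subseteq> V \<and> S \<noteq> {} \<longrightarrow> z S \<ge> 0) \<and>
     (\<forall>u\<in>V. (\<Sum>S\<in>{S. S \<subseteq> V \<and> S \<noteq> {} \<and> u \<in> S}. z S) = 1) \<and>
     (\<forall>u\<in>V. \<forall>v\<in>V. u \<noteq> v \<longrightarrow> x u v = x v u \<and>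
         (\<Sum>S\<in>{S. S \<subseteq> V \<and> S \<noteq> {} \<and> {u, v} \<subseteq> S}. z S) = 1 - x u v)"

definition y2 :: "'a set \<Rightarrow> ('a set \<Rightarrow> real) \<Rightarrow> 'a \<Rightarrow> 'a \<Rightarrow> real" where
  "y2 V z u v = (\<Sum>S\<in>{S. S \<subseteq> V \<and> S \<noteq> {} \<and> {u, v} \<subseteq> S}. z S)"

definition y3 :: "'a set \<Rightarrow> ('a set \<Rightarrow> real) \<Rightarrow> 'a \<Rightarrow> 'a \<Rightarrow> 'a \<Rightarrow> real" where
  "y3 V z u v w = (\<Sum>S\<in>{S. S \<subseteq> V \<and> S \<noteq> {} \<and> {u, v, w} \<subseteq> S}. z S)"

definition psd_mat :: "nat \<Rightarrow> (nat \<Rightarrow> nat \<Rightarrow> real) \<Rightarrow> bool" where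
  "psd_mat t Q \<longleftrightarrow> (\<forall>i<t. \<forall>j<t. Q i j = Q j i) \<and>
     (\<forall>c :: nat \<Rightarrow> real. (\<Sum>i<t. \<Sum>j<t. c i * Q i j * c j) \<ge> 0)"

definition interval_partition01 :: "nat \<Rightarrow> (nat \<Rightarrow> real set) \<Rightarrow> bool" where
  "interval_partition01 t I \<longleftrightarrow>
     (\<forall>j<t. is_interval (I j) \<and> I j \<noteq> {}) \<and>
     (\<forall>j<t. \<forall>k<t. j \<noteq> k \<longrightarrow> I j \<inter> I k = {}) \<and>
     (\<Union>j<t. I j) = {0..1}"

definition Qmat :: "'a set \<Rightarrow> ('a set \<Rightarrow> real) \<Rightarrow> (nat \<Rightarrow> real set) \<Rightarrow> 'a \<Rightarrow> nat \<Rightarrow> nat \<Rightarrow> real" where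
  "Qmat V z I u j k =
     (\<Sum>v\<in>{v\<in>V. y2 V z u v \<in> I j}. \<Sum>w\<in>{w\<in>V. y2 V z u w \<in> I k}.
        y3 V z u v w - y2 V z u v * y2 V z u w)"

end

theory Submission
  imports Defs
begin

text \<open>Restricted to the sets containing u, z is a probability distribution on clusters S, and
  y_{uv}, y_{uvw} are the probabilities that v, resp. v and w, lie in the random cluster. So
  y_{uvw} - y_{uv} y_{uw} is the covariance of the indicators of v and w, whose quadratic form
  is the variance of a linear combination of indicators. Q_u is obtained from this covariance
  matrix by summing rows and columns over buckets, a congruence, hence is again PSD.\<close>

lemma weighted_variance_nonneg:
  fixes p X :: "'b \<Rightarrow> real"
  assumes "finite F" and "\<And>S. S \<in> F \<Longrightarrow> p S \<ge> 0" and "(\<Sum>S\<in>F. p S) = 1"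
  shows "(\<Sum>S\<in>F. p S * (X S)\<^sup>2) - (\<Sum>S\<in>F. p S * X S)\<^sup>2 \<ge> 0"
proof -
  define M where "M = (\<Sum>S\<in>F. p S * X S)"
  have "(\<Sum>S\<in>F. p S * (X S - M)\<^sup>2) =
        (\<Sum>S\<in>F. p S * (X S)\<^sup>2) - 2 * M * (\<Sum>S\<in>F. p S * X S) + M\<^sup>2 * (\<Sum>S\<in>F. p S)"
    by (simp add: power2_eq_square algebra_simps sum.distrib sum_subtractf
        sum_distrib_left sum_distrib_right)
  also have "\<dots> = (\<Sum>S\<in>F. p S * (X S)\<^sup>2) - M\<^sup>2"
    using assms(3) by (simp add: M_def power2_eq_square)
  finally have "(\<Sum>S\<in>F. p S * (X S)\<^sup>2) - M\<^sup>2 = (\<Sum>S\<in>F. p S * (X S - M)\<^sup>2)" by simp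
  also have "\<dots> \<ge> 0"
    using assms(2) by (intro sum_nonneg) simp
  finally show ?thesis unfolding M_def .
qed

lemma covariance_form_eq_variance:
  fixes V :: "'a set" and p :: "'b \<Rightarrow> real" and f :: "'a \<Rightarrow> 'b \<Rightarrow> real" and a :: "'a \<Rightarrow> real"
  defines "X \<equiv> \<lambda>S. \<Sum>v\<in>V. a v * f v S"
  shows "(\<Sum>v\<in>V. \<Sum>w\<in>V. a v * a w *
           ((\<Sum>S\<in>F. p S * f v S * f w S) - (\<Sum>S\<in>F. p S * f v S) * (\<Sum>S\<in>F. p S * f w S)))
       = (\<Sum>S\<in>F. p S * (X S)\<^sup>2) - (\<Sum>S\<in>F. p S * X S)\<^sup>2"
proof -
  have "(\<Sum>v\<in>V. \<Sum>w\<in>V. a v * a w * (\<Sum>S\<in>F. p S * f v S * f w S))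
      = (\<Sum>v\<in>V. \<Sum>w\<in>V. \<Sum>S\<in>F. p S * (a v * f v S) * (a w * f w S))"
    by (simp add: sum_distrib_left mult_ac)
  also have "\<dots> = (\<Sum>S\<in>F. \<Sum>v\<in>V. \<Sum>w\<in>V. p S * (a v * f v S) * (a w * f w S))"
    by (subst sum.swap[of _ _ V], rule sum.swap)
  also have "\<dots> = (\<Sum>S\<in>F. p S * (X S)\<^sup>2)"
    by (simp add: X_def power2_eq_square sum_product sum_distrib_left mult_ac)
  finally have second_moment:
    "(\<Sum>v\<in>V. \<Sum>w\<in>V. a v * a w * (\<Sum>S\<in>F. p S * f v S * f w S)) = (\<Sum>S\<in>F. p S * (X S)\<^sup>2)" .
  have "(\<Sum>v\<in>V. a v * (\<Sum>S\<in>F. p S * f v S)) = (\<Sum>S\<in>F. \<Sum>v\<in>V. p S * (a v * f v S))"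
    by (simp add: sum_distrib_left mult_ac sum.swap[of _ F V])
  then have mean: "(\<Sum>v\<in>V. a v * (\<Sum>S\<in>F. p S * f v S)) = (\<Sum>S\<in>F. p S * X S)"
    by (simp add: X_def sum_distrib_left)
  have "(\<Sum>v\<in>V. \<Sum>w\<in>V. a v * a w * ((\<Sum>S\<in>F. p S * f v S) * (\<Sum>S\<in>F. p S * f w S)))
      = (\<Sum>v\<in>V. a v * (\<Sum>S\<in>F. p S * f v S)) * (\<Sum>w\<in>V. a w * (\<Sum>S\<in>F. p S * f w S))"
    by (simp only: sum_product[of "\<lambda>v. a v * (\<Sum>S\<in>F. p S * f v S)"] mult_ac)
  then have squared_mean:
    "(\<Sum>v\<in>V. \<Sum>w\<in>V. a v * a w * ((\<Sum>S\<in>F. p S * f v S) * (\<Sum>S\<in>F. p S * f w S)))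
      = (\<Sum>S\<in>F. p S * X S)\<^sup>2"
    by (simp only: mean power2_eq_square)
  from second_moment squared_mean show ?thesis
    by (simp add: right_diff_distrib sum_subtractf)
qed

lemma covariance_form_nonneg:
  fixes p :: "'b \<Rightarrow> real" and f :: "'a \<Rightarrow> 'b \<Rightarrow> real" and a :: "'a \<Rightarrow> real"
  assumes "finite F" and "\<And>S. S \<in> F \<Longrightarrow> p S \<ge> 0" and "(\<Sum>S\<in>F. p S) = 1"
  shows "(\<Sum>v\<in>V. \<Sum>w\<in>V. a v * a w *
           ((\<Sum>S\<in>F. p S * f v S * f w S) - (\<Sum>S\<in>F. p S * f v S) * (\<Sum>S\<in>F. p S * f w S))) \<ge> 0"
  unfolding covariance_form_eq_variance using assms by (rule weighted_variance_nonneg)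

lemma quadratic_form_congruence:
  fixes A :: "'i set" and c :: "'i \<Rightarrow> real" and B :: "'i \<Rightarrow> 'a \<Rightarrow> real" and K :: "'a \<Rightarrow> 'a \<Rightarrow> real"
  defines "g \<equiv> \<lambda>v. \<Sum>i\<in>A. c i * B i v"
  shows "(\<Sum>i\<in>A. \<Sum>j\<in>A. c i * (\<Sum>v\<in>V. \<Sum>w\<in>V. B i v * B j w * K v w) * c j)
       = (\<Sum>v\<in>V. \<Sum>w\<in>V. g v * g w * K v w)"
proof -
  define T where "T i j v w = (c i * B i v) * (c j * B j w) * K v w" for i j v w
  have "(\<Sum>i\<in>A. \<Sum>j\<in>A. c i * (\<Sum>v\<in>V. \<Sum>w\<in>V. B i v * B j w * K v w) * c j)
      = (\<Sum>i\<in>A. \<Sum>j\<in>A. \<Sum>v\<in>V. \<Sum>w\<in>V. T i j v w)"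
    by (simp add: T_def sum_distrib_left sum_distrib_right mult_ac)
  also have "\<dots> = (\<Sum>v\<in>V. \<Sum>w\<in>V. \<Sum>i\<in>A. \<Sum>j\<in>A. T i j v w)"
    by (simp only: sum.swap[where A = A and B = V])
  also have "\<dots> = (\<Sum>v\<in>V. \<Sum>w\<in>V. g v * g w * K v w)"
    unfolding g_def T_def sum_product by (simp add: sum_distrib_right)
  finally show ?thesis .
qed

lemma finite_subsets_containing:
  assumes "finite V"
  shows "finite {S. S \<subseteq> V \<and> u \<in> S}"
proof (rule finite_subset)
  show "{S. S \<subseteq> V \<and> u \<in> S} \<subseteq> Pow V" by blast
  show "finite (Pow V)" using assms by simp
qed

lemma y2_eq_sum_clusters:
  assumes "finite V"
  shows "y2 V z u v = (\<Sum>S\<in>{S. S \<subseteq> V \<and> u \<in> S}. z S * of_bool (v \<in> S))"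
  using finite_subsets_containing[OF assms]
  by (auto simp: y2_def intro!: sum.cong)

lemma y3_eq_sum_clusters:
  assumes "finite V"
  shows "y3 V z u v w = (\<Sum>S\<in>{S. S \<subseteq> V \<and> u \<in> S}. z S * of_bool (v \<in> S) * of_bool (w \<in> S))"
  using finite_subsets_containing[OF assms]
  by (auto simp: y3_def mult.assoc of_bool_conj[symmetric] intro!: sum.cong)

lemma cluster_lp_feasible_nonneg:
  assumes "cluster_lp_feasible V z x" and "S \<in> {S. S \<subseteq> V \<and> u \<in> S}"
  shows "z S \<ge> 0"
  using assms unfolding cluster_lp_feasible_def by auto

lemma cluster_lp_feasible_sum_eq_1:
  assumes "cluster_lp_feasible V z x" and "u \<in> V"
  shows "(\<Sum>S\<in>{S. S \<subseteq> V \<and> u \<in> S}. z S) = 1"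
proof -
  have "{S. S \<subseteq> V \<and> u \<in> S} = {S. S \<subseteq> V \<and> S \<noteq> {} \<and> u \<in> S}" by auto
  with assms show ?thesis unfolding cluster_lp_feasible_def by auto
qed

lemma Qmat_eq_bucket_sum:
  assumes "finite V"
  shows "Qmat V z I u j k = (\<Sum>v\<in>V. \<Sum>w\<in>V.
           of_bool (y2 V z u v \<in> I j) * of_bool (y2 V z u w \<in> I k) *
           (y3 V z u v w - y2 V z u v * y2 V z u w))"
  using assms by (simp add: Qmat_def mult.assoc sum_distrib_left[symmetric] Int_def conj_commute)

lemma Qmat_sym: "Qmat V z I u j k = Qmat V z I u k j"
proof -
  have "y3 V z u v w = y3 V z u w v" for v w
    unfolding y3_def by (simp add: insert_commute)
  then show ?thesis
    unfolding Qmat_def by (subst sum.swap) (simp add: mult.commute)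
qed

theorem lemma25:
  fixes V :: "'a set" and z :: "'a set \<Rightarrow> real" and x :: "'a \<Rightarrow> 'a \<Rightarrow> real"
    and I :: "nat \<Rightarrow> real set" and t :: nat and u :: 'a
  assumes "finite V"
    and "cluster_lp_feasible V z x"
    and "interval_partition01 t I"
    and "u \<in> V"
  shows "psd_mat t (Qmat V z I u)"
  unfolding psd_mat_def
proof (intro conjI allI impI Qmat_sym)
  fix c :: "nat \<Rightarrow> real"
  define a where "a v = (\<Sum>i<t. c i * of_bool (y2 V z u v \<in> I i))" for v
  have "(\<Sum>i<t. \<Sum>j<t. c i * Qmat V z I u i j * c j)
      = (\<Sum>v\<in>V. \<Sum>w\<in>V. a v * a w * (y3 V z u v w - y2 V z u v * y2 V z u w))"
    unfolding Qmat_eq_bucket_sum[OF assms(1)] quadratic_form_congruence a_def ..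
  also have "\<dots> \<ge> 0"
    unfolding y2_eq_sum_clusters[OF assms(1)] y3_eq_sum_clusters[OF assms(1)]
    using finite_subsets_containing[OF assms(1)] cluster_lp_feasible_nonneg[OF assms(2)]
      cluster_lp_feasible_sum_eq_1[OF assms(2,4)]
    by (rule covariance_form_nonneg)
  finally show "(\<Sum>i<t. \<Sum>j<t. c i * Qmat V z I u i j * c j) \<ge> 0" .
qed

end
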